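(* Let $N\ge 1$ and $L\ge 1$ be integers and let $f_c>0$, $B>0$. For $\phi\in[-\pi/2,\pi/2]$, $f\in[-B/2,B/2]$ and a vector $\mathbf{w}\in\mathbb{C}^N$, define the beam gain $$g(f,\phi,\mathbf{w})=\big|\mathbf{h}(f,\phi)^H\mathbf{w}\big|^2,\qquad \mathbf{h}(f,\phi)=\big[1,e^{j\pi(1+\frac{f}{f_c})\sin\phi},\dots,e^{j(N-1)\pi(1+\frac{f}{f_c})\sin\phi}\big]^T,$$ the wideband beam gain $G(\phi,\mathbf{w})=\min_{f\in[-B/2,B/2]}g(f,\phi,\mathbf{w})$, and for a codebook $\mathcal{W}=\{\mathbf{w}_1,\dots,\mathbf{w}_L\}$ the worst-case performance $$\Gamma_{\rm worst}(\mathcal{W})=\min_{\phi\in[-\pi/2,\pi/2]}\ \max_{l\in\{1,\dots,L\}}\ G(\phi,\mathbf{w}_l).$$ Let $\mathcal{W}^{\rm nar}=\{\mathbf{w}^{\rm nar}_1,\dots,\mathbf{w}^{\rm nar}_L\}$ be the narrowband codebook $$\mathbf{w}^{\rm nar}_l=\tfrac{1}{\sqrt N}\big[1,e^{j\pi\sin\phi_l},\dots,e^{j(N-1)\pi\sin\phi_l}\big]^T,\qquad \phi_l=\arcsin\!\Big(\tfrac{2l-1}{L}-1\Big),\ l=1,\dots,L.$$ Then $$\Gamma_{\rm worst}(\mathcal{W}^{\rm nar})=\begin{cases}\left[\dfrac{\sin\big(N\pi(2f_c+BL)/(4f_cL)\big)}{\sqrt N\,\sin\big(\pi(2f_c+BL)/(4f_cL)\big)}\right]^2,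 & \text{if } N<\dfrac{4f_cL}{2f_c+BL},\\[2mm] 0, & \text{otherwise},\end{cases}$$ and this worst case is attained when the AoD is $\phi=\pm\pi/2$. In particular, a necessary condition for $\Gamma_{\rm worst}(\mathcal{W}^{\rm nar})>0$ is $\dfrac{B}{f_c}<\dfrac{4}{N}$.
   Context: Setting: a uniform linear array of $N$ antennas with half-wavelength spacing at the central frequency $f_c$ transmits a signal of bandwidth $B$ with a frequency-flat analog beamformer; $f\in[-B/2,B/2]$ is the baseband frequency offset from $f_c$, $\phi$ is the angle of departure (AoD), and $j$ is the imaginary unit. The paper considers this narrowband codebook with $L\ge N$ beams. *)

theory Defs
  imports "HOL-Analysis.Analysis"
begin

text \<open>Vectors in C^N are represented as functions nat => complex, indexed by n = 0..N-1.\<close>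

definition steer :: "real \<Rightarrow> real \<Rightarrow> real \<Rightarrow> nat \<Rightarrow> complex" where
  "steer fc f \<phi> n = cis (real n * pi * (1 + f / fc) * sin \<phi>)"

definition beam_gain :: "nat \<Rightarrow> real \<Rightarrow> real \<Rightarrow> real \<Rightarrow> (nat \<Rightarrow> complex) \<Rightarrow> real" where
  "beam_gain N fc f \<phi> w = (cmod (\<Sum>n<N. cnj (steer fc f \<phi> n) * w n))\<^sup>2"

definition wb_gain :: "nat \<Rightarrow> real \<Rightarrow> real \<Rightarrow> real \<Rightarrow> (nat \<Rightarrow> complex) \<Rightarrow> real" where
  "wb_gain N fc B \<phi> w = (INF f\<in>{-B/2..B/2}. beam_gain N fc f \<phi> w)"

definition gamma_worst :: "nat \<Rightarrow> nat \<Rightarrow> real \<Rightarrow> real \<Rightarrow> (nat \<Rightarrow> nat \<Rightarrow> complex) \<Rightarrow> real" where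
  "gamma_worst N L fc B W =
     (INF \<phi>\<in>{-pi/2..pi/2}. Max ((\<lambda>l. wb_gain N fc B \<phi> (W l)) ` {1..L}))"

definition nar_angle :: "nat \<Rightarrow> nat \<Rightarrow> real" where
  "nar_angle L l = arcsin ((2 * real l - 1) / real L - 1)"

definition nar_codebook :: "nat \<Rightarrow> nat \<Rightarrow> nat \<Rightarrow> nat \<Rightarrow> complex" where
  "nar_codebook N L l n = complex_of_real (1 / sqrt (real N)) * cis (real n * pi * sin (nar_angle L l))"

end

theory Submission
  imports Defs
begin

text \<open>
  Write \<open>a = sin \<phi>\<^sub>l - (1 + f/f\<^sub>c) sin \<phi>\<close>. The narrowband beam \<open>l\<close> has gain \<open>K(\<pi> a)/N\<close>
  at frequency \<open>f\<close> and angle \<open>\<phi>\<close>, where \<open>K(x) = |\<Sum>n<N. e\<^sup>j\<^sup>n\<^sup>x|\<^sup>2 = sin\<^sup>2(N x/2) / sin\<^sup>2(x/2)\<close>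
  is the array factor. Put \<open>\<delta> = 1/L + B/(2 f\<^sub>c)\<close>. Some beam has \<open>|sin \<phi>\<^sub>l - sin \<phi>| \<le> 1/L\<close>,
  so \<open>|a| \<le> \<delta>\<close> across the band; as \<open>K\<close> decreases on \<open>[0, 2\<pi>/N]\<close>, every angle gets at
  least \<open>K(\<pi> \<delta>)/N\<close> when \<open>\<delta> < 2/N\<close>.

  At \<open>\<phi> = \<plusminus>\<pi>/2\<close> the offset \<open>|a|\<close> sweeps an interval of half-width \<open>B/(2 f\<^sub>c)\<close> around
  \<open>c = 1 \<mp> sin \<phi>\<^sub>l \<in> [1/L, 2 - 1/L]\<close>, and every such interval contains a point where \<open>K\<close> is at
  most \<open>K(\<pi> \<delta>)\<close>, or a null of \<open>K\<close> when \<open>\<delta> \<ge> 2/N\<close>. Below the first null \<open>2/N\<close> this is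
  monotonicity. Beyond it, \<open>K\<close> is below its sidelobe bound \<open>1/sin\<^sup>2(\<pi>/N) \<le> K(\<pi>/N)\<close>, which
  suffices if \<open>\<delta> \<le> 1/N\<close>; otherwise one moves towards a nearby null \<open>2j/N\<close>, where the
  numerator of \<open>K\<close> is smaller and its denominator larger than at \<open>\<delta>\<close>.
\<close>

section \<open>The array factor\<close>

definition array_gain :: "nat \<Rightarrow> real \<Rightarrow> real" where
  "array_gain N x = (cmod (\<Sum>n<N. cis (real n * x)))\<^sup>2"

lemma array_gain_nonneg: "0 \<le> array_gain N x"
  by (simp add: array_gain_def)

lemma array_gain_le: "array_gain N x \<le> (real N)\<^sup>2"
proof -
  have "cmod (\<Sum>n<N. cis (real n * x)) \<le> real N"
    using norm_sum[of "\<lambda>n. cis (real n * x)" "{..<N}"] by simp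
  then show ?thesis
    unfolding array_gain_def by (intro power_mono) auto
qed

lemma array_gain_0 [simp]: "array_gain N 0 = (real N)\<^sup>2"
  by (simp add: array_gain_def)

lemma array_gain_uminus [simp]: "array_gain N (- x) = array_gain N x"
proof -
  have "(\<Sum>n<N. cis (real n * - x)) = cnj (\<Sum>n<N. cis (real n * x))"
    by (simp add: cis_cnj)
  then show ?thesis
    unfolding array_gain_def by (metis complex_mod_cnj)
qed

lemma array_gain_abs [simp]: "array_gain N \<bar>x\<bar> = array_gain N x"
  by (cases "x \<ge> 0") auto

lemma array_gain_2pi_minus: "array_gain N (2 * pi - x) = array_gain N x"
proof -
  have "cis (real n * (2 * pi - x)) = cis (real n * - x)" for n
  proof -
    have "cis (real n * (2 * pi - x)) = cis (2 * pi * real n) * cis (real n * - x)"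
      by (simp add: cis_mult algebra_simps)
    then show ?thesis by simp
  qed
  then show ?thesis
    using array_gain_uminus unfolding array_gain_def by simp
qed

lemma cmod_cis_minus_one_sq: "(cmod (cis t - 1))\<^sup>2 = 4 * (sin (t / 2))\<^sup>2"
proof -
  have "(cmod (cis t - 1))\<^sup>2 = (cos t - 1)\<^sup>2 + (sin t)\<^sup>2"
    by (simp add: cmod_power2)
  also have "\<dots> = 2 - 2 * cos t"
    using sin_cos_squared_add[of t] by (simp add: power2_eq_square algebra_simps)
  also have "cos t = 1 - 2 * (sin (t / 2))\<^sup>2"
    using cos_double_sin[of "t / 2"] by simp
  finally show ?thesis by simp
qed

lemma array_gain_mult_sin_sq: "array_gain N x * (sin (x / 2))\<^sup>2 = (sin (real N * x / 2))\<^sup>2"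
proof -
  have "(\<Sum>n<N. cis (real n * x)) = (\<Sum>n<N. cis x ^ n)"
    by (intro sum.cong) (auto simp: Complex.DeMoivre[symmetric])
  then have "cis (real N * x) - 1 = (cis x - 1) * (\<Sum>n<N. cis (real n * x))"
    using power_diff_1_eq[of "cis x" N] by (simp add: Complex.DeMoivre)
  then have "(cmod (cis (real N * x) - 1))\<^sup>2
      = (cmod (cis x - 1))\<^sup>2 * (cmod (\<Sum>n<N. cis (real n * x)))\<^sup>2"
    by (simp add: norm_mult power_mult_distrib)
  then show ?thesis
    unfolding array_gain_def cmod_cis_minus_one_sq by simp
qed

lemma array_gain_eq:
  assumes "sin (x / 2) \<noteq> 0"
  shows "array_gain N x = (sin (real N * x / 2) / sin (x / 2))\<^sup>2"
  using array_gain_mult_sin_sq[of N x] assms by (simp add: power_divide field_simps)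

lemma array_gain_le_inverse_sin_sq:
  assumes "sin (x / 2) \<noteq> 0"
  shows "array_gain N x \<le> 1 / (sin (x / 2))\<^sup>2"
  using array_gain_eq[OF assms, of N] abs_square_le_1[of "sin (real N * x / 2)"]
  by (simp add: power_divide divide_right_mono)

lemma array_gain_null:
  fixes j :: int
  assumes "0 < j" "j < int N"
  shows "array_gain N (pi * (2 * of_int j / real N)) = 0"
proof -
  have "0 < pi * (of_int j / real N)" "pi * (of_int j / real N) < pi"
    using assms pi_gt_zero by (auto simp: field_simps)
  then have "sin (pi * (2 * of_int j / real N) / 2) \<noteq> 0"
    using sin_gt_zero by fastforce
  moreover have "real N * (pi * (2 * of_int j / real N)) / 2 = pi * of_int j"
    using assms by simp
  ultimately show ?thesis
    using array_gain_mult_sin_sq[of N "pi * (2 * of_int j / real N)"] by simp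
qed

lemma sin_ratio_deriv_numerator_nonpos:
  fixes a t :: real
  assumes "1 \<le> a" "0 \<le> t" "t \<le> pi / a"
  shows "a * cos (a * t) * sin t - sin (a * t) * cos t \<le> 0"
proof -
  let ?g = "\<lambda>t. a * cos (a * t) * sin t - sin (a * t) * cos t"
  have "?g t \<le> ?g 0"
  proof (rule DERIV_nonpos_imp_nonincreasing[OF assms(2)])
    fix u assume u: "0 \<le> u" "u \<le> t"
    have "a * u \<le> a * t"
      using u assms by (intro mult_left_mono) auto
    also have "a * t \<le> pi"
      using assms by (simp add: field_simps)
    finally have "a * u \<le> pi" .
    moreover have "u \<le> a * u"
      using u assms by (simp add: mult_le_cancel_right1)
    ultimately have "u \<le> pi" by linarith
    have "0 \<le> sin (a * u) * sin u"
      using u assms \<open>a * u \<le> pi\<close> \<open>u \<le> pi\<close> by (intro mult_nonneg_nonneg sin_ge_zero) auto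
    moreover have "1 - a\<^sup>2 \<le> 0"
      using assms(1) by (simp add: abs_le_square_iff one_le_power)
    ultimately have "(1 - a\<^sup>2) * (sin (a * u) * sin u) \<le> 0"
      by (simp add: mult_nonpos_nonneg)
    moreover have "(?g has_real_derivative (1 - a\<^sup>2) * (sin (a * u) * sin u)) (at u)"
      by (auto intro!: derivative_eq_intros simp: power2_eq_square algebra_simps)
    ultimately show "\<exists>y. (?g has_real_derivative y) (at u) \<and> y \<le> 0"
      by blast
  qed
  then show ?thesis by simp
qed

lemma sin_ratio_antimono:
  fixes a s t :: real
  assumes "1 < a" "0 < s" "s \<le> t" "t \<le> pi / a"
  shows "sin (a * t) / sin t \<le> sin (a * s) / sin s"
proof (rule DERIV_nonpos_imp_nonincreasing[OF assms(3)])
  fix u assume u: "s \<le> u" "u \<le> t"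
  have "pi / a < pi"
    using assms(1) by (simp add: divide_less_eq)
  then have "0 < sin u"
    using u assms by (intro sin_gt_zero) auto
  then have "((\<lambda>u. sin (a * u) / sin u) has_real_derivative
      (a * cos (a * u) * sin u - sin (a * u) * cos u) / (sin u * sin u)) (at u)"
    by (auto intro!: derivative_eq_intros simp: algebra_simps)
  moreover have "a * cos (a * u) * sin u - sin (a * u) * cos u \<le> 0"
    using u assms by (intro sin_ratio_deriv_numerator_nonpos) auto
  then have "(a * cos (a * u) * sin u - sin (a * u) * cos u) / (sin u * sin u) \<le> 0"
    by (simp add: divide_nonpos_nonneg)
  ultimately show "\<exists>y. ((\<lambda>u. sin (a * u) / sin u) has_real_derivative y) (at u) \<and> y \<le> 0"
    by blast
qed

lemma array_gain_antimono:
  assumes "0 \<le> x" "x \<le> y" "y \<le> 2 / real N"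
  shows "array_gain N (pi * y) \<le> array_gain N (pi * x)"
proof (cases "x = 0")
  case True
  then show ?thesis by (simp add: array_gain_le)
next
  case False
  consider "N = 0" | "N = 1" | "N \<ge> 2" by linarith
  then show ?thesis
  proof cases
    case 1
    then show ?thesis using assms False by simp
  next
    case 2
    then show ?thesis by (simp add: array_gain_def)
  next
    case 3
    have x: "0 < pi * x / 2" using assms False by simp
    have "pi / 2 * y \<le> pi / 2 * (2 / real N)"
      using assms(3) by (intro mult_left_mono) auto
    then have y: "pi * y / 2 \<le> pi / real N" by simp
    have "pi / real N < pi"
      using 3 by (simp add: divide_less_eq)
    then have sin_pos: "0 < sin (pi * x / 2)" "0 < sin (pi * y / 2)"
      using x y mult_left_mono[OF assms(2) pi_ge_zero] by (intro sin_gt_zero; linarith)+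
    have "real N * (pi * y / 2) \<le> pi"
      using y 3 by (simp add: field_simps)
    then have "0 \<le> sin (real N * (pi * y / 2))"
      using x assms by (intro sin_ge_zero) auto
    moreover have "sin (real N * (pi * y / 2)) / sin (pi * y / 2) \<le> sin (real N * (pi * x / 2)) / sin (pi * x / 2)"
      using 3 x y assms by (intro sin_ratio_antimono) auto
    ultimately have "(sin (real N * (pi * y / 2)) / sin (pi * y / 2))\<^sup>2
        \<le> (sin (real N * (pi * x / 2)) / sin (pi * x / 2))\<^sup>2"
      using sin_pos by (intro power_mono) auto
    then show ?thesis
      using sin_pos by (simp add: array_gain_eq)
  qed
qed

section \<open>Small values of the array factor on intervals\<close>

lemma sin_le_sin_within:
  assumes "0 < a" "a \<le> x" "x \<le> pi - a"
  shows "sin a \<le> sin x"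
proof (cases "x \<le> pi / 2")
  case True
  then show ?thesis using assms by (subst sin_mono_le_eq) auto
next
  case False
  then have "sin a \<le> sin (pi - x)" using assms by (subst sin_mono_le_eq) auto
  then show ?thesis by simp
qed

lemma sin_sq_le_sin_sq:
  assumes "\<bar>x\<bar> \<le> y" "y \<le> pi / 2"
  shows "(sin x)\<^sup>2 \<le> (sin y)\<^sup>2"
proof -
  have "\<bar>sin x\<bar> = sin \<bar>x\<bar>"
  proof (cases "0 \<le> x")
    case True
    then show ?thesis using assms by (simp add: sin_ge_zero)
  next
    case False
    then have "0 \<le> sin (- x)"
      using assms by (intro sin_ge_zero) auto
    then show ?thesis using False by simp
  qed
  also have "\<dots> \<le> sin y"
    using assms by (subst sin_mono_le_eq) auto
  finally show ?thesis
    using abs_le_square_iff[of "sin x" "sin y"] by simp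
qed

lemma sin_sq_add_int_pi: "(sin (x + pi * of_int j))\<^sup>2 = (sin x)\<^sup>2"
  by (simp add: sin_add)

lemma array_gain_sidelobe_le:
  assumes "2 \<le> N" "2 / real N \<le> d" "d \<le> 2 - 2 / real N"
  shows "array_gain N (pi * d) \<le> array_gain N (pi / real N)"
proof -
  have "0 < pi / real N"
    using assms(1) by simp
  have "pi / real N \<le> pi / 2"
    by (intro divide_left_mono) (use assms(1) in auto)
  then have half_le: "sin (pi / real N / 2) \<le> sin (pi / real N)"
    using \<open>0 < pi / real N\<close> by (intro sin_monotone_2pi_le) auto
  have half_pos: "0 < sin (pi / real N / 2)"
    using \<open>0 < pi / real N\<close> \<open>pi / real N \<le> pi / 2\<close> by (intro sin_gt_zero) auto
  have "pi / 2 * (2 / real N) \<le> pi / 2 * d" "pi / 2 * d \<le> pi / 2 * (2 - 2 / real N)"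
    using assms(2,3) by (intro mult_left_mono; simp)+
  then have "sin (pi / real N) \<le> sin (pi * d / 2)"
    using \<open>0 < pi / real N\<close> by (intro sin_le_sin_within) (auto simp: algebra_simps)
  have "array_gain N (pi * d) \<le> 1 / (sin (pi * d / 2))\<^sup>2"
    using \<open>sin (pi / real N) \<le> sin (pi * d / 2)\<close> half_le half_pos
    by (intro array_gain_le_inverse_sin_sq) simp
  also have "\<dots> \<le> 1 / (sin (pi / real N / 2))\<^sup>2"
    using \<open>sin (pi / real N) \<le> sin (pi * d / 2)\<close> half_le half_pos
    by (intro divide_left_mono power_mono mult_pos_pos) auto
  also have "\<dots> = array_gain N (pi / real N)"
    using half_pos assms(1) by (simp add: array_gain_eq power_divide)
  finally show ?thesis .
qed

lemma array_gain_near_null_le: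
  fixes j :: int
  assumes "0 < N" "1 / real N \<le> \<delta>" "\<delta> \<le> 2 / real N" "\<delta> \<le> d" "d \<le> 2 - \<delta>"
    and near: "\<bar>d - 2 * of_int j / real N\<bar> \<le> 2 / real N - \<delta>"
  shows "array_gain N (pi * d) \<le> array_gain N (pi * \<delta>)"
proof -
  have "0 < 1 / real N"
    using assms(1) by simp
  then have "0 < \<delta>" "\<delta> < 2"
    using assms(2,4,5) by linarith+
  then have den_pos: "0 < sin (pi * \<delta> / 2)"
    by (intro sin_gt_zero) auto
  have "pi / 2 * \<delta> \<le> pi / 2 * d" "pi / 2 * d \<le> pi / 2 * (2 - \<delta>)"
    using assms(4,5) by (intro mult_left_mono; simp)+
  then have den: "sin (pi * \<delta> / 2) \<le> sin (pi * d / 2)"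
    using \<open>0 < \<delta>\<close> by (intro sin_le_sin_within) (auto simp: algebra_simps)
  have "\<bar>real N * d / 2 - of_int j\<bar> = real N / 2 * \<bar>d - 2 * of_int j / real N\<bar>"
    using assms(1) by (simp add: abs_mult[symmetric] field_simps)
  also have "\<dots> \<le> real N / 2 * (2 / real N - \<delta>)"
    using near by (intro mult_left_mono) auto
  also have "\<dots> = 1 - real N * \<delta> / 2"
    using assms(1) by (simp add: field_simps)
  finally have "\<bar>pi * (real N * d / 2 - of_int j)\<bar> \<le> pi * (1 - real N * \<delta> / 2)"
    by (simp add: abs_mult)
  moreover have "pi * (1 - real N * \<delta> / 2) \<le> pi / 2"
    using assms(1,2) by (simp add: field_simps)
  ultimately have "(sin (pi * (real N * d / 2 - of_int j)))\<^sup>2 \<le> (sin (pi * (1 - real N * \<delta> / 2)))\<^sup>2"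
    by (rule sin_sq_le_sin_sq)
  moreover have "real N * (pi * d) / 2 = pi * (real N * d / 2 - of_int j) + pi * of_int j"
    by (simp add: algebra_simps)
  moreover have "real N * (pi * \<delta>) / 2 = pi - pi * (1 - real N * \<delta> / 2)"
    by (simp add: algebra_simps)
  ultimately have num: "(sin (real N * (pi * d) / 2))\<^sup>2 \<le> (sin (real N * (pi * \<delta>) / 2))\<^sup>2"
    by (simp only: sin_sq_add_int_pi sin_pi_minus)
  show ?thesis
    using den den_pos num by (simp add: array_gain_eq power_divide frac_le power_mono)
qed

lemma exists_null_near:
  assumes "0 < N"
  obtains j :: int where "\<bar>2 * of_int j / real N - c\<bar> \<le> 1 / real N"
proof
  have "\<bar>of_int (round (real N * c / 2)) - real N * c / 2\<bar> \<le> 1 / 2"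
    by (rule of_int_round_abs_le)
  then have "2 / real N * \<bar>of_int (round (real N * c / 2)) - real N * c / 2\<bar> \<le> 2 / real N * (1 / 2)"
    by (intro mult_left_mono) auto
  then show "\<bar>2 * of_int (round (real N * c / 2)) / real N - c\<bar> \<le> 1 / real N"
    using assms by (simp add: abs_mult[symmetric] field_simps)
qed

lemma exists_near_in_interval:
  fixes c h p s :: real
  assumes "0 \<le> h" "0 \<le> s" "\<bar>p - c\<bar> \<le> h + s"
  shows "\<exists>d\<in>{c - h..c + h}. \<bar>d - p\<bar> \<le> s"
  using assms by (intro bexI[of _ "max (c - h) (min (c + h) p)"]) (auto simp: abs_le_iff max_def min_def)

lemma array_gain_interval_null:
  assumes N: "2 \<le> N" and "1 / real N \<le> h" "2 / real N \<le> c + h" "c \<le> 1"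
  shows "\<exists>d\<in>{c - h..c + h}. array_gain N (pi * d) = 0"
proof (cases "c - h \<le> 2 / real N")
  case True
  then show ?thesis
    using assms array_gain_null[of 1 N] by (intro bexI[of _ "2 / real N"]) auto
next
  case False
  obtain j :: int where "\<bar>2 * of_int j / real N - c\<bar> \<le> 1 / real N"
    using exists_null_near[of N c] N by auto
  then have j: "c - 1 / real N \<le> 2 * of_int j / real N" "2 * of_int j / real N \<le> c + 1 / real N"
    by (simp_all add: abs_le_iff)
  have "1 / real N \<le> 1 / 2"
    using N by simp
  then have "0 < 2 * of_int j / real N" "2 * of_int j / real N < 2"
    using j False assms(2,4) by linarith+
  then have "0 < j" "j < int N"
    using N by (simp_all add: zero_less_divide_iff divide_less_eq)
  then show ?thesis
    using j assms(2) array_gain_null[of j N] by (intro bexI[of _ "2 * of_int j / real N"]) auto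
qed

lemma array_gain_interval_le_beyond_null:
  assumes N: "2 \<le> N" and "1 / real N < \<delta>" "\<delta> < 2 / real N"
    and "0 \<le> h" "\<delta> \<le> h + 1 / real N" "2 / real N < c - h" "c \<le> 1"
  shows "\<exists>d\<in>{c - h..c + h}. array_gain N (pi * d) \<le> array_gain N (pi * \<delta>)"
proof -
  have "2 / real N < 1"
    using assms by linarith
  then have "2 < real N"
    using N by (simp add: divide_less_eq)
  then have "3 / real N \<le> 1"
    by (simp add: field_simps)
  obtain j :: int where j: "\<bar>2 * of_int j / real N - c\<bar> \<le> 1 / real N"
    using exists_null_near[of N c] N by auto
  then obtain d where d: "d \<in> {c - h..c + h}" "\<bar>d - 2 * of_int j / real N\<bar> \<le> 2 / real N - \<delta>"
    using exists_near_in_interval[of h "2 / real N - \<delta>" "2 * of_int j / real N" c] assms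
    by auto
  have "array_gain N (pi * d) \<le> array_gain N (pi * \<delta>)"
  proof (rule array_gain_near_null_le[OF _ _ _ _ _ d(2)])
    have "1 / real N + 2 / real N = 3 / real N"
      by (simp add: add_divide_distrib[symmetric])
    then show "d \<le> 2 - \<delta>"
      using d j assms(7) \<open>3 / real N \<le> 1\<close> by (simp add: abs_le_iff)
  qed (use N d assms in auto)
  then show ?thesis
    using d by blast
qed

lemma array_gain_interval_le:
  assumes N: "2 \<le> N" and \<delta>: "0 < \<delta>" "\<delta> < 2 / real N"
    and "0 \<le> h" "\<delta> \<le> c + h" "\<delta> \<le> h + 1 / real N" "c \<le> 1"
  shows "\<exists>d\<in>{c - h..c + h}. array_gain N (pi * d) \<le> array_gain N (pi * \<delta>)"
proof -
  have "1 / real N \<le> 1 / 2"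
    using N by simp
  consider (below) "c + h \<le> 2 / real N" | (straddle) "c - h \<le> 2 / real N" "2 / real N < c + h"
    | (narrow) "2 / real N < c - h" "\<delta> \<le> 1 / real N" | (wide) "2 / real N < c - h" "1 / real N < \<delta>"
    by linarith
  then show ?thesis
  proof cases
    case below
    then have "array_gain N (pi * (c + h)) \<le> array_gain N (pi * \<delta>)"
      using assms by (intro array_gain_antimono) auto
    then show ?thesis
      using assms by (intro bexI[of _ "c + h"]) auto
  next
    case straddle
    then show ?thesis
      using N array_gain_null[of 1 N] array_gain_nonneg[of N "pi * \<delta>"]
      by (intro bexI[of _ "2 / real N"]) auto
  next
    case narrow
    have "array_gain N (pi * (c - h)) \<le> array_gain N (pi / real N)"
      using narrow assms \<open>1 / real N \<le> 1 / 2\<close> by (intro array_gain_sidelobe_le) auto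
    also have "\<dots> \<le> array_gain N (pi * \<delta>)"
      using array_gain_antimono[of \<delta> "1 / real N" N] narrow \<delta> by (simp add: divide_right_mono)
    finally show ?thesis
      using assms by (intro bexI[of _ "c - h"]) auto
  next
    case wide
    then show ?thesis
      using array_gain_interval_le_beyond_null[OF N _ \<delta>(2) assms(4,6)] assms(7) by blast
  qed
qed

definition mainlobe_gain :: "nat \<Rightarrow> real \<Rightarrow> real" where
  "mainlobe_gain N \<delta> = (if \<delta> < 2 / real N then array_gain N (pi * \<delta>) / real N else 0)"

lemma array_gain_interval_min:
  assumes N: "2 \<le> N" and "0 < \<delta>" "0 \<le> h" "\<delta> \<le> c + h" "c - h \<le> 2 - \<delta>" "\<delta> \<le> h + 1 / real N"
  shows "\<exists>d\<in>{c - h..c + h}. array_gain N (pi * d) / real N \<le> mainlobe_gain N \<delta>"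
proof -
  have half: "\<exists>d\<in>{c - h..c + h}. array_gain N (pi * d) / real N \<le> mainlobe_gain N \<delta>"
    if c: "\<delta> \<le> c + h" "c \<le> 1" for c
  proof (cases "\<delta> < 2 / real N")
    case True
    then obtain d where "d \<in> {c - h..c + h}" "array_gain N (pi * d) \<le> array_gain N (pi * \<delta>)"
      using array_gain_interval_le[OF N assms(2) True assms(3) c(1) assms(6) c(2)] by blast
    then show ?thesis
      using True by (intro bexI[of _ d]) (auto simp: mainlobe_gain_def divide_right_mono)
  next
    case False
    then have "1 / real N \<le> h" "2 / real N \<le> c + h"
      using assms(6) c(1) by linarith+
    then obtain d where "d \<in> {c - h..c + h}" "array_gain N (pi * d) = 0"
      using array_gain_interval_null[OF N _ _ c(2)] by blast
    then show ?thesis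
      by (intro bexI[of _ d]) (auto simp: mainlobe_gain_def array_gain_nonneg)
  qed
  show ?thesis
  proof (cases "c \<le> 1")
    case True
    then show ?thesis using half assms by blast
  next
    case False
    then obtain d where d: "d \<in> {2 - c - h..2 - c + h}" "array_gain N (pi * d) / real N \<le> mainlobe_gain N \<delta>"
      using half[of "2 - c"] assms by auto
    have "array_gain N (pi * (2 - d)) = array_gain N (pi * d)"
      using array_gain_2pi_minus[of N "pi * d"] by (simp add: algebra_simps)
    then show ?thesis
      using d by (intro bexI[of _ "2 - d"]) auto
  qed
qed

section \<open>The narrowband codebook\<close>

lemma sin_nar_angle:
  assumes "1 \<le> l" "l \<le> L"
  shows "sin (nar_angle L l) = (2 * real l - 1) / real L - 1"
proof -
  have "0 \<le> (2 * real l - 1) / real L" "(2 * real l - 1) / real L \<le> 2"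
    using assms by (auto simp: field_simps)
  then show ?thesis
    unfolding nar_angle_def by (intro sin_arcsin) auto
qed

lemma beam_gain_nar_codebook:
  "beam_gain N fc f \<phi> (nar_codebook N L l) =
     array_gain N (pi * (sin (nar_angle L l) - (1 + f / fc) * sin \<phi>)) / real N"
proof -
  define x where "x = pi * (sin (nar_angle L l) - (1 + f / fc) * sin \<phi>)"
  have "cnj (steer fc f \<phi> n) * nar_codebook N L l n = of_real (1 / sqrt (real N)) * cis (real n * x)" for n
  proof -
    have "real n * pi * sin (nar_angle L l) + - (real n * pi * (1 + f / fc) * sin \<phi>) = real n * x"
      by (simp add: x_def algebra_simps)
    then show ?thesis
      by (simp add: steer_def nar_codebook_def cis_cnj mult.left_commute[of _ "of_real _"] cis_mult)
  qed
  then have "(\<Sum>n<N. cnj (steer fc f \<phi> n) * nar_codebook N L l n)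
      = of_real (1 / sqrt (real N)) * (\<Sum>n<N. cis (real n * x))"
    by (simp add: sum_distrib_left)
  then show ?thesis
    unfolding beam_gain_def array_gain_def x_def[symmetric]
    by (simp add: norm_divide power_divide)
qed

lemma wb_gain_le_beam_gain:
  assumes "f \<in> {-B/2..B/2}"
  shows "wb_gain N fc B \<phi> w \<le> beam_gain N fc f \<phi> w"
  unfolding wb_gain_def beam_gain_def
  by (rule cINF_lower[OF _ assms]) (auto intro: bdd_belowI[of _ 0])

lemma wb_gain_greatest:
  assumes "0 \<le> B" "\<And>f. f \<in> {-B/2..B/2} \<Longrightarrow> v \<le> beam_gain N fc f \<phi> w"
  shows "v \<le> wb_gain N fc B \<phi> w"
  unfolding wb_gain_def using assms by (intro cINF_greatest) auto

lemma wb_gain_nonneg: "0 \<le> B \<Longrightarrow> 0 \<le> wb_gain N fc B \<phi> w"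
  by (rule wb_gain_greatest) (auto simp: beam_gain_def)

lemma exists_nar_beam_near:
  assumes "1 \<le> L" "\<bar>s\<bar> \<le> 1"
  shows "\<exists>l\<in>{1..L}. \<bar>sin (nar_angle L l) - s\<bar> \<le> 1 / real L"
proof -
  define x where "x = real L * (1 + s) / 2"
  define l where "l = max 1 (nat \<lceil>x\<rceil>)"
  have "0 \<le> x" "x \<le> real L"
    using assms by (auto simp: x_def)
  then have l: "1 \<le> l" "l \<le> L" "real l - 1 \<le> x" "x \<le> real l"
    unfolding l_def using assms by (auto simp: nat_le_iff ceiling_le_iff of_nat_max) linarith+
  have "sin (nar_angle L l) - s = (2 * real l - 1 - 2 * x) / real L"
    using l assms by (simp add: sin_nar_angle x_def field_simps)
  moreover have "\<bar>2 * real l - 1 - 2 * x\<bar> \<le> 1"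
    using l by linarith
  ultimately show ?thesis
    using l by (intro bexI[of _ l]) (auto simp: abs_divide divide_right_mono)
qed

lemma mainlobe_gain_le_wb_gain:
  assumes "0 < fc" "0 \<le> B" "\<bar>sin (nar_angle L l) - sin \<phi>\<bar> \<le> r"
  shows "mainlobe_gain N (r + B / (2 * fc)) \<le> wb_gain N fc B \<phi> (nar_codebook N L l)"
proof (cases "r + B / (2 * fc) < 2 / real N")
  case True
  show ?thesis
  proof (rule wb_gain_greatest[OF assms(2)])
    fix f assume f: "f \<in> {-B/2..B/2}"
    define a where "a = sin (nar_angle L l) - (1 + f / fc) * sin \<phi>"
    have "\<bar>f / fc\<bar> \<le> B / (2 * fc)"
      using f assms(1) by (auto simp: abs_divide field_simps)
    moreover have "\<bar>f / fc * sin \<phi>\<bar> \<le> \<bar>f / fc\<bar>"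
      unfolding abs_mult by (rule mult_left_le[OF abs_sin_le_one]) simp
    ultimately have "\<bar>f / fc * sin \<phi>\<bar> \<le> B / (2 * fc)"
      by linarith
    moreover have "a = (sin (nar_angle L l) - sin \<phi>) - f / fc * sin \<phi>"
      by (simp add: a_def algebra_simps)
    then have "\<bar>a\<bar> \<le> \<bar>sin (nar_angle L l) - sin \<phi>\<bar> + \<bar>f / fc * sin \<phi>\<bar>"
      by (simp only: abs_triangle_ineq4)
    ultimately have "\<bar>a\<bar> \<le> r + B / (2 * fc)"
      using assms(3) by linarith
    then have "array_gain N (pi * (r + B / (2 * fc))) \<le> array_gain N (pi * \<bar>a\<bar>)"
      using True by (intro array_gain_antimono) auto
    also have "array_gain N (pi * \<bar>a\<bar>) = array_gain N (pi * a)"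
      using array_gain_abs[of N "pi * a"] by (simp add: abs_mult)
    finally show "mainlobe_gain N (r + B / (2 * fc)) \<le> beam_gain N fc f \<phi> (nar_codebook N L l)"
      using True by (simp add: mainlobe_gain_def beam_gain_nar_codebook a_def abs_mult divide_right_mono)
  qed
next
  case False
  then show ?thesis
    using wb_gain_nonneg[OF assms(2)] by (simp add: mainlobe_gain_def)
qed

lemma wb_gain_endfire_le_mainlobe_gain:
  assumes N: "2 \<le> N" "N \<le> L" and "0 < fc" "0 \<le> B" "l \<in> {1..L}" "\<bar>sin \<phi>\<bar> = 1"
  shows "wb_gain N fc B \<phi> (nar_codebook N L l) \<le> mainlobe_gain N (1 / real L + B / (2 * fc))"
proof -
  define h where "h = B / (2 * fc)"
  \<comment> \<open>As \<open>sin \<phi> = \<plusminus>1\<close>, the offset is \<open>-sin \<phi> (c + f/f\<^sub>c)\<close>: the band sweeps \<open>[c - h, c + h]\<close>.\<close>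
  define c where "c = 1 - sin \<phi> * sin (nar_angle L l)"
  have "1 / real L \<le> 1 / real N" "0 < 1 / real L"
    using N by (auto intro!: divide_left_mono)
  moreover have "0 \<le> h"
    using assms by (simp add: h_def)
  moreover have "\<bar>sin (nar_angle L l)\<bar> \<le> 1 - 1 / real L"
    using assms by (auto simp: sin_nar_angle abs_le_iff field_simps)
  then have "1 / real L \<le> c" "c \<le> 2 - 1 / real L"
    using assms(6) by (auto simp: c_def abs_le_iff abs_if split: if_splits)
  ultimately have "0 < 1 / real L + h" "1 / real L + h \<le> c + h"
    "c - h \<le> 2 - (1 / real L + h)" "1 / real L + h \<le> h + 1 / real N"
    by linarith+
  then obtain d where d: "d \<in> {c - h..c + h}"
    "array_gain N (pi * d) / real N \<le> mainlobe_gain N (1 / real L + h)"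
    using array_gain_interval_min[OF N(1) _ \<open>0 \<le> h\<close>] by blast
  define f where "f = fc * (d - c)"
  have "\<bar>f\<bar> \<le> fc * h"
    using d assms by (auto simp: f_def abs_mult abs_le_iff intro!: mult_left_mono)
  also have "fc * h = B / 2"
    using assms by (simp add: h_def)
  finally have f: "f \<in> {-B/2..B/2}"
    using abs_le_D1 abs_le_D2 by fastforce
  have "f / fc = d - c"
    using assms(3) by (simp add: f_def)
  then have "sin (nar_angle L l) - (1 + f / fc) * sin \<phi> = - (sin \<phi> * d)"
    using assms(6) by (auto simp: c_def abs_if algebra_simps split: if_splits)
  then have "beam_gain N fc f \<phi> (nar_codebook N L l) = array_gain N (pi * d) / real N"
    using assms(6) by (auto simp: beam_gain_nar_codebook abs_if split: if_splits)
  then have "wb_gain N fc B \<phi> (nar_codebook N L l) \<le> array_gain N (pi * d) / real N"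
    using wb_gain_le_beam_gain[OF f] by metis
  then show ?thesis
    using d(2) unfolding h_def by linarith
qed

lemma mainlobe_gain_le_max_wb_gain:
  assumes "1 \<le> L" "0 < fc" "0 \<le> B"
  shows "mainlobe_gain N (1 / real L + B / (2 * fc))
           \<le> Max ((\<lambda>l. wb_gain N fc B \<phi> (nar_codebook N L l)) ` {1..L})"
proof -
  obtain l where "l \<in> {1..L}" "\<bar>sin (nar_angle L l) - sin \<phi>\<bar> \<le> 1 / real L"
    using exists_nar_beam_near[OF assms(1) abs_sin_le_one] by blast
  then have "mainlobe_gain N (1 / real L + B / (2 * fc)) \<le> wb_gain N fc B \<phi> (nar_codebook N L l)"
    by (intro mainlobe_gain_le_wb_gain[OF assms(2,3)])
  also have "\<dots> \<le> Max ((\<lambda>l. wb_gain N fc B \<phi> (nar_codebook N L l)) ` {1..L})"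
    using \<open>l \<in> {1..L}\<close> by (intro Max_ge) auto
  finally show ?thesis .
qed

lemma max_wb_gain_endfire:
  assumes "2 \<le> N" "N \<le> L" "0 < fc" "0 \<le> B" "\<bar>sin \<phi>\<bar> = 1"
  shows "Max ((\<lambda>l. wb_gain N fc B \<phi> (nar_codebook N L l)) ` {1..L})
           = mainlobe_gain N (1 / real L + B / (2 * fc))"
proof (rule antisym)
  show "Max ((\<lambda>l. wb_gain N fc B \<phi> (nar_codebook N L l)) ` {1..L})
          \<le> mainlobe_gain N (1 / real L + B / (2 * fc))"
    using assms wb_gain_endfire_le_mainlobe_gain by (auto simp: Max_le_iff)
  show "mainlobe_gain N (1 / real L + B / (2 * fc))
          \<le> Max ((\<lambda>l. wb_gain N fc B \<phi> (nar_codebook N L l)) ` {1..L})"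
    using assms by (intro mainlobe_gain_le_max_wb_gain) auto
qed

lemma gamma_worst_nar_codebook:
  assumes "2 \<le> N" "N \<le> L" "0 < fc" "0 \<le> B"
  shows "gamma_worst N L fc B (nar_codebook N L) = mainlobe_gain N (1 / real L + B / (2 * fc))"
  unfolding gamma_worst_def
proof (rule cInf_eq_minimum)
  show "mainlobe_gain N (1 / real L + B / (2 * fc))
          \<in> (\<lambda>\<phi>. Max ((\<lambda>l. wb_gain N fc B \<phi> (nar_codebook N L l)) ` {1..L})) ` {-pi/2..pi/2}"
    using max_wb_gain_endfire[OF assms, of "pi/2"] by (intro image_eqI[of _ _ "pi/2"]) auto
qed (use assms mainlobe_gain_le_max_wb_gain in auto)

lemma mainlobe_gain_closed_form:
  assumes "0 < N" "0 < L" "0 < fc" "0 \<le> B"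
  shows "(if real N < 4 * fc * real L / (2 * fc + B * real L)
          then (sin (real N * pi * (2 * fc + B * real L) / (4 * fc * real L)) /
                (sqrt (real N) * sin (pi * (2 * fc + B * real L) / (4 * fc * real L))))\<^sup>2
          else 0)
        = mainlobe_gain N (1 / real L + B / (2 * fc))"
proof -
  define \<delta> where "\<delta> = 1 / real L + B / (2 * fc)"
  have "0 < \<delta>"
    using assms by (simp add: \<delta>_def add_pos_nonneg)
  have half: "(2 * fc + B * real L) / (4 * fc * real L) = \<delta> / 2"
    using assms by (simp add: \<delta>_def field_simps)
  have "2 * fc + B * real L = \<delta> * (2 * fc * real L)"
    using assms by (simp add: \<delta>_def field_simps)
  then have ratio: "4 * fc * real L / (2 * fc + B * real L) = 2 / \<delta>"
    using assms \<open>0 < \<delta>\<close> by (simp add: field_simps)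
  have cond: "real N < 4 * fc * real L / (2 * fc + B * real L) \<longleftrightarrow> \<delta> < 2 / real N"
    unfolding ratio using \<open>0 < \<delta>\<close> assms(1) by (simp add: less_divide_eq mult.commute)
  have args: "real N * pi * (2 * fc + B * real L) / (4 * fc * real L) = real N * (pi * \<delta>) / 2"
       "pi * (2 * fc + B * real L) / (4 * fc * real L) = pi * \<delta> / 2"
    unfolding times_divide_eq_right[symmetric] half by simp_all
  have "sin (pi * \<delta> / 2) \<noteq> 0" if "\<delta> < 2 / real N"
  proof -
    have "2 / real N \<le> 2"
      using assms(1) by (simp add: divide_le_eq)
    then show ?thesis
      using that \<open>0 < \<delta>\<close> by (intro less_imp_neq[symmetric] sin_gt_zero) auto
  qed
  then show ?thesis
    unfolding cond args mainlobe_gain_def \<delta>_def[symmetric]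
    using assms(1) by (cases "\<delta> < 2 / real N") (simp_all add: array_gain_eq power_divide power_mult_distrib)
qed

theorem proposition1:
  fixes N L :: nat and fc B :: real
  assumes "N \<ge> 2" and "L \<ge> N" and "fc > 0" and "B > 0"
  shows "gamma_worst N L fc B (nar_codebook N L) =
           (if real N < 4 * fc * real L / (2 * fc + B * real L)
            then (sin (real N * pi * (2 * fc + B * real L) / (4 * fc * real L)) /
                  (sqrt (real N) * sin (pi * (2 * fc + B * real L) / (4 * fc * real L))))\<^sup>2
            else 0)
       \<and> gamma_worst N L fc B (nar_codebook N L) =
           Max ((\<lambda>l. wb_gain N fc B (pi/2) (nar_codebook N L l)) ` {1..L})
       \<and> gamma_worst N L fc B (nar_codebook N L) =
           Max ((\<lambda>l. wb_gain N fc B (-pi/2) (nar_codebook N L l)) ` {1..L})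
       \<and> (gamma_worst N L fc B (nar_codebook N L) > 0 \<longrightarrow> B / fc < 4 / real N)"
proof -
  have B: "0 \<le> B" and "0 < N" "0 < L"
    using assms by simp_all
  have positive: "B / fc < 4 / real N" if "0 < mainlobe_gain N (1 / real L + B / (2 * fc))"
  proof -
    have "1 / real L + B / (2 * fc) < 2 / real N"
      using that by (auto simp: mainlobe_gain_def split: if_splits)
    moreover have "0 < 1 / real L"
      using \<open>0 < L\<close> by simp
    ultimately have "B / (2 * fc) < 2 / real N"
      by linarith
    then show ?thesis
      by (simp add: field_simps)
  qed
  show ?thesis
    unfolding gamma_worst_nar_codebook[OF assms(1-3) B]
      mainlobe_gain_closed_form[OF \<open>0 < N\<close> \<open>0 < L\<close> assms(3) B]
    using max_wb_gain_endfire[OF assms(1-3) B, of "pi/2"] max_wb_gain_endfire[OF assms(1-3) B, of "-pi/2"]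
      positive
    by simp
qed

end
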